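(* Let $n\in\mathbb{N}$ and assume $(Q_{n-1})$: $d_{i,l}+d_{j,k}\le d_{i,k}+d_{j,l}$ for all integers $-1\le i\le j\le k\le l\le n-1$. Then for each $m\in\mathbb{N}$ with $m\le n$, the minimization problem defining $d_{m,n}$ admits an optimal transport plan that is both simple and nested.
   Context: Let $\mathbb{N}=\{0,1,2,\dots\}$. Fix a sequence $(\pi^n)_{n\in\mathbb{N}}$ where each $\pi^n=(\pi^n_i)_{i\in\mathbb{N}}$ is a probability distribution on $\mathbb{N}$ with support contained in $\{0,\dots,n\}$, and $\pi^n\ne\pi^m$ for $m\ne n$. Define reals $d_{m,n}$ for $m,n\in\mathbb{N}\cup\{-1\}$ recursively as follows: $d_{-1,-1}=0$, $d_{-1,j}=d_{j,-1}=1$ for $j\in\mathbb{N}$, and for $m,n\in\mathbb{N}$, $$d_{m,n}=\min_{z\in\mathcal{F}_{m,n}}\sum_{i=0}^m\sum_{j=0}^n z_{i,j}\,d_{i-1,j-1},$$ where $\mathcal{F}_{m,n}$ is the set of transport plans from $\pi^m$ to $\pi^n$, i.e. arrays $z=(z_{i,j})_{0\le i\le m,\,0\le j\le n}$ with $z_{i,j}\ge0$, $\sum_{j=0}^n z_{i,j}=\pi^m_i$ for all $i\le m$, and $\sum_{i=0}^m z_{i,j}=\pi^n_j$ for all $j\le n$. For $m\le n$, a transport plan $z\in\mathcal{F}_{m,n}$ is simple if $z_{i,i}=\min\{\pi^m_i,\pi^n_i\}$ for all $i=0,\dots,m$; it is nested if there are no indices $i<j<k<l$ with $z_{i,k}>0$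 and $z_{j,l}>0$. *)

theory Defs
  imports Complex_Main
begin

definition prob_seq :: "(nat \<Rightarrow> nat \<Rightarrow> real) \<Rightarrow> bool" where
  "prob_seq p \<longleftrightarrow>
     (\<forall>n i. 0 \<le> p n i) \<and> (\<forall>n i. n < i \<longrightarrow> p n i = 0) \<and>
     (\<forall>n. (\<Sum>i\<le>n. p n i) = 1) \<and> (\<forall>m n. m \<noteq> n \<longrightarrow> p m \<noteq> p n)"

definition transport_plans :: "(nat \<Rightarrow> nat \<Rightarrow> real) \<Rightarrow> nat \<Rightarrow> nat \<Rightarrow> (nat \<Rightarrow> nat \<Rightarrow> real) set" where
  "transport_plans p m n = {z. (\<forall>i j. 0 \<le> z i j) \<and> (\<forall>i j. (m < i \<or> n < j) \<longrightarrow> z i j = 0) \<and>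
      (\<forall>i\<le>m. (\<Sum>j\<le>n. z i j) = p m i) \<and> (\<forall>j\<le>n. (\<Sum>i\<le>m. z i j) = p n j)}"

text \<open>dd p a b is d_{a-1,b-1} (shift of indices so that -1 becomes 0).\<close>
function dd :: "(nat \<Rightarrow> nat \<Rightarrow> real) \<Rightarrow> nat \<Rightarrow> nat \<Rightarrow> real" where
  "dd p 0 0 = 0"
| "dd p 0 (Suc j) = 1"
| "dd p (Suc i) 0 = 1"
| "dd p (Suc m) (Suc n) =
     Inf ((\<lambda>z. \<Sum>i\<le>m. \<Sum>j\<le>n. z i j * dd p i j) ` transport_plans p m n)"
  by pat_completeness auto
termination
  by (relation "measure (\<lambda>(p, a, b). a + b)") auto

definition d :: "(nat \<Rightarrow> nat \<Rightarrow> real) \<Rightarrow> int \<Rightarrow> int \<Rightarrow> real" where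
  "d p m n = dd p (nat (m + 1)) (nat (n + 1))"

definition transport_cost :: "(nat \<Rightarrow> nat \<Rightarrow> real) \<Rightarrow> nat \<Rightarrow> nat \<Rightarrow> (nat \<Rightarrow> nat \<Rightarrow> real) \<Rightarrow> real" where
  "transport_cost p m n z = (\<Sum>i\<le>m. \<Sum>j\<le>n. z i j * d p (int i - 1) (int j - 1))"

definition optimal_plan :: "(nat \<Rightarrow> nat \<Rightarrow> real) \<Rightarrow> nat \<Rightarrow> nat \<Rightarrow> (nat \<Rightarrow> nat \<Rightarrow> real) \<Rightarrow> bool" where
  "optimal_plan p m n z \<longleftrightarrow> z \<in> transport_plans p m n \<and>
     (\<forall>z' \<in> transport_plans p m n. transport_cost p m n z \<le> transport_cost p m n z')"

definition simple_plan :: "(nat \<Rightarrow> nat \<Rightarrow> real) \<Rightarrow> nat \<Rightarrow> nat \<Rightarrow> (nat \<Rightarrow> nat \<Rightarrow> real) \<Rightarrow> bool" where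
  "simple_plan p m n z \<longleftrightarrow> (\<forall>i\<le>m. z i i = min (p m i) (p n i))"

definition nested_plan :: "(nat \<Rightarrow> nat \<Rightarrow> real) \<Rightarrow> bool" where
  "nested_plan z \<longleftrightarrow> \<not> (\<exists>i j k l. i < j \<and> j < k \<and> k < l \<and> z i k > 0 \<and> z j l > 0)"

end

theory Submission
  imports Defs "HOL-Analysis.Analysis"
begin

text \<open>The transport plans form a compact set, so there is a plan that minimises the cost
  and, among all minimisers, maximises the secondary objective
  \<open>\<Sum> z i j * w i j\<close> with \<open>w i j = C [i = j] - i j\<close>.  Moving mass \<open>t\<close> from two cells
  \<open>(a, b), (c, e)\<close> of such a plan to \<open>(a, e), (c, b)\<close> therefore can lower neither the cost
  nor, if the cost does not increase, the secondary objective.  If the plan were not simple,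
  the exchange filling a diagonal cell \<open>(i, i)\<close> does not increase the cost because
  \<open>d\<close> is a metric, and gains \<open>C\<close>; if it had crossing cells \<open>(i, k), (j, l)\<close> with
  \<open>i < j < k < l\<close>, the exchange to \<open>(i, l), (j, k)\<close> does not increase the cost by the
  Monge property \<open>(Q\<^sub>n\<^sub>-\<^sub>1)\<close> and gains \<open>(j - i) (l - k)\<close>.\<close>

lemma sum_gt_term_imp_pos_other:
  fixes f :: "'a \<Rightarrow> real"
  assumes "finite A" "i \<in> A" "f i < (\<Sum>j\<in>A. f j)"
  shows "\<exists>k\<in>A - {i}. 0 < f k"
proof (rule ccontr)
  assume "\<not> ?thesis"
  then have "(\<Sum>j\<in>A - {i}. f j) \<le> 0"
    by (intro sum_nonpos) (auto simp: not_less)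
  then show False
    using assms by (simp add: sum.remove)
qed

lemma prob_seq_nonneg: "prob_seq p \<Longrightarrow> 0 \<le> p n i"
  by (simp add: prob_seq_def)

lemma prob_seq_zero: "prob_seq p \<Longrightarrow> n < i \<Longrightarrow> p n i = 0"
  by (simp add: prob_seq_def)

lemma prob_seq_sum: "prob_seq p \<Longrightarrow> (\<Sum>i\<le>n. p n i) = 1"
  by (simp add: prob_seq_def)

lemma prob_seq_le_1:
  assumes "prob_seq p"
  shows "p n i \<le> 1"
proof (cases "i \<le> n")
  case True
  then have "p n i \<le> (\<Sum>i\<le>n. p n i)"
    using prob_seq_nonneg[OF assms] by (intro member_le_sum) auto
  then show ?thesis
    using prob_seq_sum[OF assms] by simp
qed (use prob_seq_zero[OF assms] in auto)

lemma transport_plan_nonneg: "z \<in> transport_plans p m n \<Longrightarrow> 0 \<le> z i j"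
  by (simp add: transport_plans_def)

lemma transport_plan_zero: "z \<in> transport_plans p m n \<Longrightarrow> m < i \<or> n < j \<Longrightarrow> z i j = 0"
  by (auto simp: transport_plans_def)

lemma transport_plan_row_sum:
  "z \<in> transport_plans p m n \<Longrightarrow> i \<le> m \<Longrightarrow> (\<Sum>j\<le>n. z i j) = p m i"
  by (simp add: transport_plans_def)

lemma transport_plan_col_sum:
  "z \<in> transport_plans p m n \<Longrightarrow> j \<le> n \<Longrightarrow> (\<Sum>i\<le>m. z i j) = p n j"
  by (simp add: transport_plans_def)

lemma transport_plan_pos_imp_le:
  "z \<in> transport_plans p m n \<Longrightarrow> 0 < z i j \<Longrightarrow> i \<le> m \<and> j \<le> n"
  using transport_plan_zero[of z p m n i j] by force

lemma transport_plan_le_row: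
  assumes "prob_seq p" "z \<in> transport_plans p m n"
  shows "z i j \<le> p m i"
proof (cases "i \<le> m \<and> j \<le> n")
  case True
  then have "z i j \<le> (\<Sum>j\<le>n. z i j)"
    using transport_plan_nonneg[OF assms(2)] by (intro member_le_sum) auto
  then show ?thesis
    using transport_plan_row_sum[OF assms(2)] True by simp
qed (use transport_plan_zero[OF assms(2)] prob_seq_nonneg[OF assms(1)] in auto)

lemma transport_plan_le_col:
  assumes "prob_seq p" "z \<in> transport_plans p m n"
  shows "z i j \<le> p n j"
proof (cases "i \<le> m \<and> j \<le> n")
  case True
  then have "z i j \<le> (\<Sum>i\<le>m. z i j)"
    using transport_plan_nonneg[OF assms(2)] by (intro member_le_sum) auto
  then show ?thesis
    using transport_plan_col_sum[OF assms(2)] True by simp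
qed (use transport_plan_zero[OF assms(2)] prob_seq_nonneg[OF assms(1)] in auto)

lemma product_plan_in_transport_plans:
  assumes "prob_seq p"
  shows "(\<lambda>i j. p m i * p n j) \<in> transport_plans p m n"
  using prob_seq_nonneg[OF assms] prob_seq_zero[OF assms] prob_seq_sum[OF assms]
  by (auto simp: transport_plans_def sum_distrib_left[symmetric] sum_distrib_right[symmetric])

lemma transport_plans_nonempty: "prob_seq p \<Longrightarrow> transport_plans p m n \<noteq> {}"
  using product_plan_in_transport_plans by blast

definition plan_cost :: "(nat \<Rightarrow> nat \<Rightarrow> real) \<Rightarrow> nat \<Rightarrow> nat \<Rightarrow> (nat \<Rightarrow> nat \<Rightarrow> real) \<Rightarrow> real" where
  "plan_cost f m n z = (\<Sum>i\<le>m. \<Sum>j\<le>n. z i j * f i j)"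

lemma plan_cost_nonneg:
  assumes "\<And>i j. 0 \<le> z i j" "\<And>i j. i \<le> m \<Longrightarrow> j \<le> n \<Longrightarrow> 0 \<le> f i j"
  shows "0 \<le> plan_cost f m n z"
  unfolding plan_cost_def using assms by (intro sum_nonneg mult_nonneg_nonneg) auto

section \<open>The transport distance is a metric\<close>

lemma dd_Suc_Suc: "dd p (Suc m) (Suc n) = Inf (plan_cost (dd p) m n ` transport_plans p m n)"
  by (simp add: plan_cost_def)

lemma dd_nonneg: "prob_seq p \<Longrightarrow> 0 \<le> dd p a b"
proof (induction p a b rule: dd.induct)
  case (4 p m n)
  show ?case
    unfolding dd_Suc_Suc
  proof (rule cInf_greatest)
    show "plan_cost (dd p) m n ` transport_plans p m n \<noteq> {}"
      using transport_plans_nonempty[OF "4.prems"] by simp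
  next
    fix x assume "x \<in> plan_cost (dd p) m n ` transport_plans p m n"
    then obtain z where z: "z \<in> transport_plans p m n" and x: "x = plan_cost (dd p) m n z"
      by blast
    show "0 \<le> x"
      unfolding x using "4.IH"[OF z] "4.prems" transport_plan_nonneg[OF z]
      by (intro plan_cost_nonneg) auto
  qed
qed simp_all

lemma dd_Suc_Suc_le:
  assumes "prob_seq p" "z \<in> transport_plans p m n"
  shows "dd p (Suc m) (Suc n) \<le> plan_cost (dd p) m n z"
proof -
  have "bdd_below (plan_cost (dd p) m n ` transport_plans p m n)"
    using dd_nonneg[OF assms(1)] transport_plan_nonneg
    by (intro bdd_belowI[of _ 0]) (auto intro: plan_cost_nonneg)
  then show ?thesis
    unfolding dd_Suc_Suc using assms(2) by (intro cInf_lower) auto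
qed

lemma dd_Suc_Suc_greatest:
  assumes "prob_seq p" "\<And>z. z \<in> transport_plans p m n \<Longrightarrow> x \<le> plan_cost (dd p) m n z"
  shows "x \<le> dd p (Suc m) (Suc n)"
  unfolding dd_Suc_Suc using assms transport_plans_nonempty[OF assms(1)]
  by (intro cInf_greatest) auto

lemma dd_le_1: "prob_seq p \<Longrightarrow> dd p a b \<le> 1"
proof (induction p a b rule: dd.induct)
  case (4 p m n)
  let ?z = "\<lambda>i j. p m i * p n j"
  have z: "?z \<in> transport_plans p m n"
    by (rule product_plan_in_transport_plans[OF "4.prems"])
  have "dd p (Suc m) (Suc n) \<le> plan_cost (dd p) m n ?z"
    by (rule dd_Suc_Suc_le[OF "4.prems" z])
  also have "\<dots> \<le> (\<Sum>i\<le>m. \<Sum>j\<le>n. ?z i j)"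
    unfolding plan_cost_def using "4.IH"[OF z] "4.prems" transport_plan_nonneg[OF z]
    by (intro sum_mono mult_left_le) auto
  also have "\<dots> = 1"
    using transport_plan_row_sum[OF z] prob_seq_sum[OF "4.prems"] by simp
  finally show ?case .
qed simp_all

lemma dd_self:
  assumes "prob_seq p"
  shows "dd p a a = 0"
proof (induction a rule: less_induct)
  case (less a)
  show ?case
  proof (cases a)
    case (Suc b)
    let ?z = "\<lambda>i j. if i = j then p b i else 0"
    have z: "?z \<in> transport_plans p b b"
      using prob_seq_nonneg[OF assms] prob_seq_zero[OF assms]
      by (auto simp: transport_plans_def)
    have "dd p (Suc b) (Suc b) \<le> plan_cost (dd p) b b ?z"
      by (rule dd_Suc_Suc_le[OF assms z])
    also have "\<dots> = (\<Sum>i\<le>b. p b i * dd p i i)"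
      by (simp add: plan_cost_def if_distrib[of "\<lambda>x. x * _"] cong: if_cong)
    also have "\<dots> = 0"
      using less Suc by simp
    finally show ?thesis
      using dd_nonneg[OF assms, of a a] Suc by simp
  qed simp
qed

text \<open>Gluing: \<open>z\<^sub>1 i j z\<^sub>2 j l / p c j\<close> is a coupling on three indices with
  \<open>(i, j)\<close>-marginal \<open>z\<^sub>1\<close> and \<open>(j, l)\<close>-marginal \<open>z\<^sub>2\<close>, so its \<open>(i, l)\<close>-marginal is a
  plan from \<open>p a\<close> to \<open>p b\<close>.  Where \<open>p c j = 0\<close>, division by zero yields the right value
  \<open>0\<close>, since column \<open>j\<close> of \<open>z\<^sub>1\<close> and row \<open>j\<close> of \<open>z\<^sub>2\<close> vanish.\<close>

definition glue_coupling ::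
    "(nat \<Rightarrow> nat \<Rightarrow> real) \<Rightarrow> nat \<Rightarrow> (nat \<Rightarrow> nat \<Rightarrow> real) \<Rightarrow> (nat \<Rightarrow> nat \<Rightarrow> real) \<Rightarrow> nat \<Rightarrow> nat \<Rightarrow> nat \<Rightarrow> real" where
  "glue_coupling p c z1 z2 i j l = z1 i j * z2 j l / p c j"

definition glue_plan ::
    "(nat \<Rightarrow> nat \<Rightarrow> real) \<Rightarrow> nat \<Rightarrow> (nat \<Rightarrow> nat \<Rightarrow> real) \<Rightarrow> (nat \<Rightarrow> nat \<Rightarrow> real) \<Rightarrow> nat \<Rightarrow> nat \<Rightarrow> real" where
  "glue_plan p c z1 z2 i l = (\<Sum>j\<le>c. glue_coupling p c z1 z2 i j l)"

context
  fixes p z1 z2 a b c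
  assumes p: "prob_seq p"
    and z1: "z1 \<in> transport_plans p a c" and z2: "z2 \<in> transport_plans p c b"
begin

lemma glue_coupling_nonneg: "0 \<le> glue_coupling p c z1 z2 i j l"
  unfolding glue_coupling_def
  using transport_plan_nonneg[OF z1] transport_plan_nonneg[OF z2] prob_seq_nonneg[OF p] by auto

lemma glue_coupling_sum_last:
  assumes "j \<le> c"
  shows "(\<Sum>l\<le>b. glue_coupling p c z1 z2 i j l) = z1 i j"
proof (cases "p c j = 0")
  case True
  then show ?thesis
    using transport_plan_le_col[OF p z1, of i j] transport_plan_nonneg[OF z1, of i j]
    by (simp add: glue_coupling_def)
next
  case False
  then show ?thesis
    using transport_plan_row_sum[OF z2 assms]
    by (simp add: glue_coupling_def sum_divide_distrib[symmetric] sum_distrib_left[symmetric])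
qed

lemma glue_coupling_sum_first:
  assumes "j \<le> c"
  shows "(\<Sum>i\<le>a. glue_coupling p c z1 z2 i j l) = z2 j l"
proof (cases "p c j = 0")
  case True
  then show ?thesis
    using transport_plan_le_row[OF p z2, of j l] transport_plan_nonneg[OF z2, of j l]
    by (simp add: glue_coupling_def)
next
  case False
  then show ?thesis
    using transport_plan_col_sum[OF z1 assms]
    by (simp add: glue_coupling_def sum_divide_distrib[symmetric] sum_distrib_right[symmetric])
qed

lemma glue_plan_in_transport_plans: "glue_plan p c z1 z2 \<in> transport_plans p a b"
  unfolding transport_plans_def
proof (intro CollectI conjI allI impI)
  fix i l
  show "0 \<le> glue_plan p c z1 z2 i l"
    unfolding glue_plan_def by (intro sum_nonneg glue_coupling_nonneg)
  assume "a < i \<or> b < l"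
  then show "glue_plan p c z1 z2 i l = 0"
    using transport_plan_zero[OF z1, of i] transport_plan_zero[OF z2, of _ l]
    by (auto simp: glue_plan_def glue_coupling_def intro!: sum.neutral)
next
  fix i assume "i \<le> a"
  have "(\<Sum>l\<le>b. glue_plan p c z1 z2 i l) = (\<Sum>j\<le>c. \<Sum>l\<le>b. glue_coupling p c z1 z2 i j l)"
    unfolding glue_plan_def by (rule sum.swap)
  also have "\<dots> = p a i"
    using transport_plan_row_sum[OF z1 \<open>i \<le> a\<close>] by (simp add: glue_coupling_sum_last)
  finally show "(\<Sum>l\<le>b. glue_plan p c z1 z2 i l) = p a i" .
next
  fix l assume "l \<le> b"
  have "(\<Sum>i\<le>a. glue_plan p c z1 z2 i l) = (\<Sum>j\<le>c. \<Sum>i\<le>a. glue_coupling p c z1 z2 i j l)"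
    unfolding glue_plan_def by (rule sum.swap)
  also have "\<dots> = p b l"
    using transport_plan_col_sum[OF z2 \<open>l \<le> b\<close>] by (simp add: glue_coupling_sum_first)
  finally show "(\<Sum>i\<le>a. glue_plan p c z1 z2 i l) = p b l" .
qed

lemma plan_cost_glue_plan_le:
  assumes triangle: "\<And>i j l. i \<le> a \<Longrightarrow> j \<le> c \<Longrightarrow> l \<le> b \<Longrightarrow> f i l \<le> f i j + f j l"
  shows "plan_cost f a b (glue_plan p c z1 z2) \<le> plan_cost f a c z1 + plan_cost f c b z2"
proof -
  let ?w = "glue_coupling p c z1 z2"
  have "plan_cost f a b (glue_plan p c z1 z2) = (\<Sum>i\<le>a. \<Sum>l\<le>b. \<Sum>j\<le>c. ?w i j l * f i l)"
    by (simp add: plan_cost_def glue_plan_def sum_distrib_right)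
  also have "\<dots> \<le> (\<Sum>i\<le>a. \<Sum>l\<le>b. \<Sum>j\<le>c. ?w i j l * f i j + ?w i j l * f j l)"
    using triangle glue_coupling_nonneg
    by (intro sum_mono) (simp add: distrib_left[symmetric] mult_left_mono)
  also have "\<dots> = (\<Sum>i\<le>a. \<Sum>j\<le>c. (\<Sum>l\<le>b. ?w i j l) * f i j)
                 + (\<Sum>j\<le>c. \<Sum>l\<le>b. (\<Sum>i\<le>a. ?w i j l) * f j l)"
    by (simp add: sum.distrib sum_distrib_right sum.swap[of _ "{..b}" "{..c}"]
        sum.swap[of _ "{..a}" "{..c}"] sum.swap[of _ "{..a}" "{..b}"])
  also have "\<dots> = plan_cost f a c z1 + plan_cost f c b z2"
    by (simp add: plan_cost_def glue_coupling_sum_last glue_coupling_sum_first)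
  finally show ?thesis .
qed

end

lemma dd_triangle:
  assumes p: "prob_seq p"
  shows "dd p x y \<le> dd p x w + dd p w y"
proof (induction "x + y + w" arbitrary: x y w rule: less_induct)
  case less
  show ?case
  proof (cases "x = 0 \<or> y = 0 \<or> w = 0")
    case True
    then show ?thesis
      using dd_nonneg[OF p, of x y] dd_nonneg[OF p, of x w] dd_nonneg[OF p, of w y] dd_le_1[OF p, of x y]
      by (cases x; cases y; cases w) auto
  next
    case False
    then obtain a b c where abc: "x = Suc a" "y = Suc b" "w = Suc c"
      by (metis not0_implies_Suc)
    have "dd p (Suc a) (Suc b) - dd p (Suc c) (Suc b) \<le> plan_cost (dd p) a c z1"
      if z1: "z1 \<in> transport_plans p a c" for z1
    proof -
      have "dd p (Suc a) (Suc b) \<le> plan_cost (dd p) a c z1 + plan_cost (dd p) c b z2"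
        if z2: "z2 \<in> transport_plans p c b" for z2
        using dd_Suc_Suc_le[OF p glue_plan_in_transport_plans[OF p z1 z2]]
          plan_cost_glue_plan_le[OF p z1 z2, of "dd p"] less abc
        by force
      then have "dd p (Suc a) (Suc b) - plan_cost (dd p) a c z1 \<le> dd p (Suc c) (Suc b)"
        by (intro dd_Suc_Suc_greatest[OF p]) (simp add: algebra_simps)
      then show ?thesis
        by simp
    qed
    then have "dd p (Suc a) (Suc b) - dd p (Suc c) (Suc b) \<le> dd p (Suc a) (Suc c)"
      by (rule dd_Suc_Suc_greatest[OF p])
    then show ?thesis
      using abc by simp
  qed
qed

section \<open>Exchanging mass between two cells\<close>

definition cell :: "nat \<Rightarrow> nat \<Rightarrow> nat \<Rightarrow> nat \<Rightarrow> real" where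
  "cell a b i j = (if i = a \<and> j = b then 1 else 0)"

definition exchange ::
    "(nat \<Rightarrow> nat \<Rightarrow> real) \<Rightarrow> nat \<Rightarrow> nat \<Rightarrow> nat \<Rightarrow> nat \<Rightarrow> real \<Rightarrow> nat \<Rightarrow> nat \<Rightarrow> real" where
  "exchange z a b c e t i j =
     z i j + t * (cell a e i j + cell c b i j - cell a b i j - cell c e i j)"

lemma sum_cell_row: "b \<le> n \<Longrightarrow> (\<Sum>j\<le>n. cell a b i j) = (if i = a then 1 else 0)"
  by (simp add: cell_def)

lemma sum_cell_col: "a \<le> m \<Longrightarrow> (\<Sum>i\<le>m. cell a b i j) = (if j = b then 1 else 0)"
  by (simp add: cell_def)

lemma plan_cost_cell:
  assumes "a \<le> m" "b \<le> n"
  shows "plan_cost f m n (cell a b) = f a b"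
proof -
  have "(\<Sum>j\<le>n. cell a b i j * f i j) = (if i = a then f a b else 0)" for i
    using assms by (simp add: cell_def if_distrib[of "\<lambda>x. x * _"] cong: if_cong)
  then show ?thesis
    using assms by (simp add: plan_cost_def)
qed

lemma exchange_in_transport_plans:
  assumes z: "z \<in> transport_plans p m n" and "a \<le> m" "c \<le> m" "b \<le> n" "e \<le> n"
    and "0 \<le> t" "t \<le> z a b" "t \<le> z c e"
  shows "exchange z a b c e t \<in> transport_plans p m n"
  unfolding transport_plans_def
proof (intro CollectI conjI allI impI)
  fix i j
  show "0 \<le> exchange z a b c e t i j"
    using transport_plan_nonneg[OF z, of i j] assms by (auto simp: exchange_def cell_def)
  assume "m < i \<or> n < j"
  then show "exchange z a b c e t i j = 0"
    using transport_plan_zero[OF z] assms by (auto simp: exchange_def cell_def)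
next
  fix i assume "i \<le> m"
  then show "(\<Sum>j\<le>n. exchange z a b c e t i j) = p m i"
    using transport_plan_row_sum[OF z] assms
    by (simp add: exchange_def sum.distrib sum_subtractf sum_distrib_left[symmetric] sum_cell_row)
next
  fix j assume "j \<le> n"
  then show "(\<Sum>i\<le>m. exchange z a b c e t i j) = p n j"
    using transport_plan_col_sum[OF z] assms
    by (simp add: exchange_def sum.distrib sum_subtractf sum_distrib_left[symmetric] sum_cell_col)
qed

lemma plan_cost_exchange:
  assumes "a \<le> m" "c \<le> m" "b \<le> n" "e \<le> n"
  shows "plan_cost f m n (exchange z a b c e t)
           = plan_cost f m n z + t * (f a e + f c b - f a b - f c e)"
proof -
  have "plan_cost f m n (exchange z a b c e t) = plan_cost f m n z
          + t * (plan_cost f m n (cell a e) + plan_cost f m n (cell c b)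
                 - plan_cost f m n (cell a b) - plan_cost f m n (cell c e))"
    by (simp add: plan_cost_def exchange_def algebra_simps sum.distrib sum_subtractf
        sum_distrib_left)
  then show ?thesis
    using assms by (simp add: plan_cost_cell)
qed

section \<open>Lexicographically optimal plans\<close>

lemma compact_PiE_UNIV:
  fixes S :: "'a \<Rightarrow> 'b::topological_space set"
  assumes "\<And>i. compact (S i)"
  shows "compact (Pi\<^sub>E UNIV S)"
proof -
  have "compactin (product_topology (\<lambda>_. euclidean) UNIV) (Pi\<^sub>E UNIV S)"
    by (simp add: compactin_PiE assms)
  then show ?thesis
    by (simp only: euclidean_product_topology compactin_euclidean_iff)
qed

lemma continuous_on_plan_entry [continuous_intros]:
  "continuous_on S (\<lambda>z :: nat \<Rightarrow> nat \<Rightarrow> real. z i j)"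
  by (rule continuous_on_subset[OF continuous_on_product_then_coordinatewise[OF
        continuous_on_product_coordinates]]) simp

lemma compact_transport_plans:
  assumes p: "prob_seq p"
  shows "compact (transport_plans p m n)"
proof -
  let ?B = "Pi\<^sub>E UNIV (\<lambda>i::nat. Pi\<^sub>E UNIV (\<lambda>j::nat. {0..1::real}))"
  have B: "compact ?B"
    by (intro compact_PiE_UNIV compact_Icc)
  have "transport_plans p m n \<subseteq> ?B"
  proof
    fix z assume z: "z \<in> transport_plans p m n"
    have "z i j \<in> {0..1}" for i j
      using transport_plan_nonneg[OF z, of i j] transport_plan_le_row[OF p z, of i j]
        prob_seq_le_1[OF p, of m i] by simp
    then show "z \<in> ?B"
      by (simp add: PiE_UNIV_domain)
  qed
  moreover have "closed (transport_plans p m n)"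
    unfolding transport_plans_def
    by (intro closed_Collect_conj closed_Collect_all closed_Collect_imp open_Collect_const
        closed_Collect_le closed_Collect_eq continuous_intros)
  ultimately show ?thesis
    using compact_Int_closed[OF B] by (metis Int_absorb1)
qed

lemma continuous_on_plan_cost: "continuous_on S (plan_cost f m n)"
  unfolding plan_cost_def by (intro continuous_intros)

definition lex_optimal_plan ::
    "(nat \<Rightarrow> nat \<Rightarrow> real) \<Rightarrow> (nat \<Rightarrow> nat \<Rightarrow> real) \<Rightarrow> (nat \<Rightarrow> nat \<Rightarrow> real) \<Rightarrow> nat \<Rightarrow> nat
      \<Rightarrow> (nat \<Rightarrow> nat \<Rightarrow> real) \<Rightarrow> bool" where
  "lex_optimal_plan p f g m n z \<longleftrightarrow> z \<in> transport_plans p m n \<and>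
     (\<forall>z' \<in> transport_plans p m n. plan_cost f m n z \<le> plan_cost f m n z' \<and>
        (plan_cost f m n z' \<le> plan_cost f m n z \<longrightarrow> plan_cost g m n z' \<le> plan_cost g m n z))"

lemma lex_optimal_plan_exists:
  assumes p: "prob_seq p"
  shows "\<exists>z. lex_optimal_plan p f g m n z"
proof -
  let ?P = "transport_plans p m n"
  obtain z0 where z0: "z0 \<in> ?P" "\<And>z. z \<in> ?P \<Longrightarrow> plan_cost f m n z0 \<le> plan_cost f m n z"
    using continuous_attains_inf[OF compact_transport_plans[OF p] transport_plans_nonempty[OF p]
        continuous_on_plan_cost] by blast
  let ?S = "?P \<inter> {z. plan_cost f m n z \<le> plan_cost f m n z0}"
  have "compact ?S"
    by (intro compact_Int_closed compact_transport_plans[OF p] closed_Collect_le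
        continuous_on_plan_cost continuous_on_const)
  moreover have "?S \<noteq> {}"
    using z0 by auto
  ultimately obtain z where "z \<in> ?S" "\<And>z'. z' \<in> ?S \<Longrightarrow> plan_cost g m n z' \<le> plan_cost g m n z"
    using continuous_attains_sup[OF _ _ continuous_on_plan_cost] by metis
  then have "lex_optimal_plan p f g m n z"
    using z0 by (force simp: lex_optimal_plan_def)
  then show ?thesis
    by blast
qed

lemma lex_optimal_plan_exchange:
  assumes z: "lex_optimal_plan p f g m n z" and pos: "0 < z a b" "0 < z c e"
    and cost: "f a e + f c b \<le> f a b + f c e"
  shows "g a e + g c b \<le> g a b + g c e"
proof -
  have zP: "z \<in> transport_plans p m n"
    using z by (simp add: lex_optimal_plan_def)
  have le: "a \<le> m" "b \<le> n" "c \<le> m" "e \<le> n"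
    using transport_plan_pos_imp_le[OF zP] pos by auto
  define t where "t = min (z a b) (z c e)"
  have t: "0 < t" "t \<le> z a b" "t \<le> z c e"
    using pos by (auto simp: t_def)
  let ?z' = "exchange z a b c e t"
  have z'P: "?z' \<in> transport_plans p m n"
    using exchange_in_transport_plans[OF zP] le t by simp
  have "plan_cost f m n ?z' \<le> plan_cost f m n z"
    using plan_cost_exchange[OF le(1,3,2,4)] cost t by (simp add: mult_le_0_iff)
  then have "plan_cost g m n ?z' \<le> plan_cost g m n z"
    using z z'P by (simp add: lex_optimal_plan_def)
  then have "t * (g a e + g c b - g a b - g c e) \<le> 0"
    using plan_cost_exchange[OF le(1,3,2,4)] by simp
  then show ?thesis
    using t by (simp add: mult_le_0_iff)
qed

text \<open>The diagonal bonus \<open>2 n\<^sup>2 + 1\<close> outweighs any change of the product term on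
  \<open>{0..n}\<^sup>2\<close>, and the strict submodularity of \<open>- i j\<close> rewards uncrossing.\<close>

definition tie_break :: "nat \<Rightarrow> nat \<Rightarrow> nat \<Rightarrow> real" where
  "tie_break n i j = (if i = j then 2 * real n ^ 2 + 1 else 0) - real i * real j"

lemma tie_break_fill_diagonal:
  assumes "i \<le> n" "j \<le> n" "k \<le> n" "i \<noteq> k" "j \<noteq> i"
  shows "tie_break n i k + tie_break n j i < tie_break n i i + tie_break n j k"
proof -
  have "tie_break n i k + tie_break n j i = - (real i * real k) - real j * real i"
    "tie_break n i i = 2 * real n ^ 2 + 1 - real i * real i"
    "- (real j * real k) \<le> tie_break n j k"
    using assms by (simp_all add: tie_break_def)
  moreover have "real i * real i \<le> real n ^ 2" "real j * real k \<le> real n ^ 2"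
    using assms by (simp_all add: power2_eq_square mult_mono)
  moreover have "0 \<le> real i * real k" "0 \<le> real j * real i"
    by simp_all
  ultimately show ?thesis
    by linarith
qed

lemma tie_break_uncross:
  assumes "i < j" "j < k" "k < l"
  shows "tie_break n i k + tie_break n j l < tie_break n i l + tie_break n j k"
proof -
  have "0 < (real j - real i) * (real l - real k)"
    using assms by simp
  then show ?thesis
    using assms by (simp add: tie_break_def algebra_simps)
qed

lemma lex_optimal_plan_simple:
  assumes p: "prob_seq p" and z: "lex_optimal_plan p f (tie_break n) m n z" and "m \<le> n"
    and f_self: "\<And>i. f i i = 0" and triangle: "\<And>i j k. f j k \<le> f j i + f i k"
  shows "simple_plan p m n z"
  unfolding simple_plan_def
proof (intro allI impI)
  fix i assume "i \<le> m"
  with \<open>m \<le> n\<close> have "i \<le> n" by simp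
  have zP: "z \<in> transport_plans p m n"
    using z by (simp add: lex_optimal_plan_def)
  show "z i i = min (p m i) (p n i)"
  proof (rule ccontr)
    assume "z i i \<noteq> min (p m i) (p n i)"
    then have "z i i < p m i" "z i i < p n i"
      using transport_plan_le_row[OF p zP, of i i] transport_plan_le_col[OF p zP, of i i]
      by (auto simp: min_def split: if_splits)
    then obtain j k where jk: "0 < z i k" "k \<noteq> i" "0 < z j i" "j \<noteq> i"
      using sum_gt_term_imp_pos_other[of "{..n}" i "z i"] transport_plan_row_sum[OF zP \<open>i \<le> m\<close>]
        sum_gt_term_imp_pos_other[of "{..m}" i "\<lambda>j. z j i"] transport_plan_col_sum[OF zP \<open>i \<le> n\<close>]
        \<open>i \<le> m\<close> \<open>i \<le> n\<close> by auto
    have "tie_break n i i + tie_break n j k \<le> tie_break n i k + tie_break n j i"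
      using lex_optimal_plan_exchange[OF z jk(1,3)] f_self triangle[of j k i] by simp
    moreover have "j \<le> n" "k \<le> n"
      using transport_plan_pos_imp_le[OF zP] jk \<open>m \<le> n\<close> by force+
    ultimately show False
      using tie_break_fill_diagonal[OF \<open>i \<le> n\<close> _ _ jk(2)[symmetric] jk(4)] by fastforce
  qed
qed

lemma lex_optimal_plan_nested:
  assumes z: "lex_optimal_plan p f (tie_break n) m n z"
    and monge: "\<And>a b c e. a \<le> b \<Longrightarrow> b \<le> c \<Longrightarrow> c \<le> e \<Longrightarrow> e \<le> n \<Longrightarrow>
                  f a e + f b c \<le> f a c + f b e"
  shows "nested_plan z"
  unfolding nested_plan_def
proof
  assume "\<exists>i j k l. i < j \<and> j < k \<and> k < l \<and> 0 < z i k \<and> 0 < z j l"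
  then obtain i j k l where ord: "i < j" "j < k" "k < l" and pos: "0 < z i k" "0 < z j l"
    by blast
  have "l \<le> n"
    using z pos transport_plan_pos_imp_le by (force simp: lex_optimal_plan_def)
  then have "tie_break n i l + tie_break n j k \<le> tie_break n i k + tie_break n j l"
    using lex_optimal_plan_exchange[OF z pos] monge[of i j k l] ord by simp
  then show False
    using tie_break_uncross[OF ord, of n] by simp
qed

lemma transport_cost_eq_plan_cost: "transport_cost p m n = plan_cost (dd p) m n"
  by (simp add: transport_cost_def plan_cost_def d_def fun_eq_iff)

theorem proposition2:
  fixes p :: "nat \<Rightarrow> nat \<Rightarrow> real" and n m :: nat
  assumes "prob_seq p"
    and Q: "\<And>i j k l :: int. -1 \<le> i \<Longrightarrow> i \<le> j \<Longrightarrow> j \<le> k \<Longrightarrow> k \<le> l \<Longrightarrow> l \<le> int n - 1 \<Longrightarrow>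
              d p i l + d p j k \<le> d p i k + d p j l"
    and "m \<le> n"
  shows "\<exists>z. optimal_plan p m n z \<and> simple_plan p m n z \<and> nested_plan z"
proof -
  have monge: "dd p a e + dd p b c \<le> dd p a c + dd p b e"
    if "a \<le> b" "b \<le> c" "c \<le> e" "e \<le> n" for a b c e
    using Q[of "int a - 1" "int b - 1" "int c - 1" "int e - 1"] that by (simp add: d_def)
  obtain z where z: "lex_optimal_plan p (dd p) (tie_break n) m n z"
    using lex_optimal_plan_exists[OF \<open>prob_seq p\<close>] by blast
  have "optimal_plan p m n z"
    using z by (simp add: optimal_plan_def lex_optimal_plan_def transport_cost_eq_plan_cost)
  moreover have "simple_plan p m n z"
    using lex_optimal_plan_simple[OF \<open>prob_seq p\<close> z \<open>m \<le> n\<close>]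
      dd_self[OF \<open>prob_seq p\<close>] dd_triangle[OF \<open>prob_seq p\<close>] by blast
  moreover have "nested_plan z"
    using lex_optimal_plan_nested[OF z monge] by blast
  ultimately show ?thesis
    by blast
qed

end
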